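(* Let $T>0$, $U_T=U\times(0,T]$, $\overline{U_T}=\bar U\times[0,T]$ and $\partial_pU_T=\overline{U_T}\setminus U_T$. Assume $u\in C(\overline{U_T})\cap C^{2,1}_{x,t}(U_T)$, $u\ge0$ on $\overline{U_T}$, and $u$ satisfies $u_t=\nabla\cdot\big(X(u,\nabla u+u^2\mathcal Z(x,t))\big)$ in $U_T$. Then $\max_{\overline{U_T}}u=\max_{\partial_pU_T}u$.
   Context: Let $N\ge1$ be an integer, $0=\bar\alpha_0<\bar\alpha_1<\dots<\bar\alpha_N$, $a_0,\dots,a_N>0$, $g(s)=\sum_{i=0}^Na_is^{\bar\alpha_i}$ for $s\ge0$ ($0^0=1$). Fix a unit vector $\vec k\in\mathbb R^3$ and let $\mathbf J$ be the matrix with $\mathbf Jx=\vec k\times x$. For $z\in\mathbb R$, $F_z(v)=g(|v|)v+z\mathbf Jv$ is a bijection of $\mathbb R^3$; fix $R_*\ge0$ and let $X(z,y)=F_{R_*z}^{-1}(y)$ for $z\in\mathbb R$, $y\in\mathbb R^3$. Let $\mathcal G>0$, $\Omega\ge0$, $e_0\in C^\infty(\mathbb R,\mathbb R^3)$ with $|e_0(t)|=1$, and $\mathcal Z(x,t)=-\mathcal Ge_0(t)+\Omega^2\mathbf J^2x$. $U\subset\mathbb R^3$ is open, bounded, with $C^1$ boundary. *)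

theory Defs
  imports "HOL-Analysis.Analysis"
begin

text \<open>Power with the convention 0 powr 0 = 1 (the paper's 0^0 = 1).\<close>
definition pw :: "real \<Rightarrow> real \<Rightarrow> real" where
  "pw s \<alpha> = (if \<alpha> = 0 then 1 else s powr \<alpha>)"

definition gfun :: "nat \<Rightarrow> (nat \<Rightarrow> real) \<Rightarrow> (nat \<Rightarrow> real) \<Rightarrow> real \<Rightarrow> real" where
  "gfun N a \<alpha> s = (\<Sum>i=0..N. a i * pw s (\<alpha> i))"

definition Ffun :: "nat \<Rightarrow> (nat \<Rightarrow> real) \<Rightarrow> (nat \<Rightarrow> real) \<Rightarrow> real^3 \<Rightarrow> real \<Rightarrow> real^3 \<Rightarrow> real^3" where
  "Ffun N a \<alpha> k z v = gfun N a \<alpha> (norm v) *\<^sub>R v + z *\<^sub>R cross3 k v"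

definition Xfun :: "nat \<Rightarrow> (nat \<Rightarrow> real) \<Rightarrow> (nat \<Rightarrow> real) \<Rightarrow> real^3 \<Rightarrow> real \<Rightarrow> real \<Rightarrow> real^3 \<Rightarrow> real^3" where
  "Xfun N a \<alpha> k Rs z y = inv (Ffun N a \<alpha> k (Rs * z)) y"

definition Zfun :: "real^3 \<Rightarrow> real \<Rightarrow> real \<Rightarrow> (real \<Rightarrow> real^3) \<Rightarrow> real^3 \<Rightarrow> real \<Rightarrow> real^3" where
  "Zfun k G \<Omega> e0 x t = - (G *\<^sub>R e0 t) + \<Omega>\<^sup>2 *\<^sub>R cross3 k (cross3 k x)"

definition smooth_fun :: "(real \<Rightarrow> real^3) \<Rightarrow> bool" where
  "smooth_fun f \<longleftrightarrow> (\<exists>D :: nat \<Rightarrow> real \<Rightarrow> real^3. D 0 = f \<and>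
      (\<forall>n t. (D n has_vector_derivative D (Suc n) t) (at t)))"

definition pd :: "'n::finite \<Rightarrow> (real^'n \<Rightarrow> real) \<Rightarrow> real^'n \<Rightarrow> real" where
  "pd i f x = frechet_derivative f (at x) (axis i 1)"

definition grad :: "(real^'n::finite \<Rightarrow> real) \<Rightarrow> real^'n \<Rightarrow> real^'n" where
  "grad f x = (\<chi> i. pd i f x)"

definition divg :: "(real^'n::finite \<Rightarrow> real^'n) \<Rightarrow> real^'n \<Rightarrow> real" where
  "divg W x = (\<Sum>i\<in>UNIV. frechet_derivative W (at x) (axis i 1) $ i)"

text \<open>Open bounded set with C^1 boundary: locally, after a rigid motion, U is the
  region above the graph of a C^1 function of two variables.\<close>
definition C1_boundary :: "(real^3) set \<Rightarrow> bool" where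
  "C1_boundary U \<longleftrightarrow> (\<forall>p\<in>frontier U. \<exists>r>0. \<exists>Q \<gamma>.
      orthogonal_transformation (Q :: real^3 \<Rightarrow> real^3) \<and>
      (\<forall>y. (\<gamma> :: real^2 \<Rightarrow> real) differentiable (at y)) \<and>
      (\<forall>i. continuous_on UNIV (pd i \<gamma>)) \<and>
      U \<inter> ball p r = {x \<in> ball p r. Q (x - p) $ 3 > \<gamma> (vector [Q (x - p) $ 1, Q (x - p) $ 2])})"

text \<open>u in C^{2,1}_{x,t}(U_T), U_T = U x (0,T]; time derivative at t = T is one-sided
  (taken within (0,T]).\<close>
definition C21 :: "(real^3) set \<Rightarrow> real \<Rightarrow> (real^3 \<Rightarrow> real \<Rightarrow> real) \<Rightarrow> bool" where
  "C21 U T u \<longleftrightarrow>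
     (let UT = {(x,t). x \<in> U \<and> 0 < t \<and> t \<le> T} in
      (\<forall>(x,t)\<in>UT. (\<lambda>y. u y t) differentiable (at x) \<and>
         (\<forall>i. (\<lambda>y. pd i (\<lambda>z. u z t) y) differentiable (at x)) \<and>
         (\<lambda>s. u x s) differentiable (at t within {0<..T})) \<and>
      continuous_on UT (\<lambda>(x,t). u x t) \<and>
      (\<forall>i. continuous_on UT (\<lambda>(x,t). pd i (\<lambda>z. u z t) x)) \<and>
      (\<forall>i j. continuous_on UT (\<lambda>(x,t). pd j (pd i (\<lambda>z. u z t)) x)) \<and>
      continuous_on UT (\<lambda>(x,t). vector_derivative (\<lambda>s. u x s) (at t within {0<..T})))"

end

theory Submission
  imports Defs
begin

text \<open>For \<open>\<epsilon> > 0\<close> the function \<open>u - \<epsilon> t\<close> attains its maximum over the compact cylinder,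
  and the maximum point cannot lie in \<open>U\<^sub>T\<close>: there \<open>u\<^sub>t \<ge> \<epsilon> > 0\<close>, while \<open>div W \<le> 0\<close> for the
  flux \<open>W = X(u, \<nabla>u + u\<^sup>2 Z)\<close>. Indeed \<open>F\<^sub>z(W) = \<nabla>u + u\<^sup>2 Z\<close> with \<open>z = R\<^sub>* u\<close>, and differentiating in \<open>x\<close> at
  the maximum point, where \<open>\<nabla>u = 0\<close>, gives \<open>A DW = D\<^sup>2u + u\<^sup>2 \<Omega>\<^sup>2 J\<^sup>2\<close> with \<open>A = DF(W)\<close>.
  The symmetric part \<open>g(|W|) I + \<beta> W W\<^sup>T\<close> of \<open>A\<close> is positive definite (the term \<open>z J\<close> is
  skew) and the right-hand side is symmetric negative semidefinite, so
  \<open>div W = tr (A\<^sup>-\<^sup>1 (D\<^sup>2u + u\<^sup>2 \<Omega>\<^sup>2 J\<^sup>2)) \<le> 0\<close>. Letting \<open>\<epsilon> \<rightarrow> 0\<close> gives the claim.\<close>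

section \<open>Partial derivatives\<close>

lemma has_real_derivative_along_line:
  fixes f :: "'a::real_normed_vector \<Rightarrow> real"
  assumes "f differentiable at (y + s *\<^sub>R v)"
  shows "((\<lambda>s. f (y + s *\<^sub>R v)) has_real_derivative frechet_derivative f (at (y + s *\<^sub>R v)) v) (at s)"
proof -
  let ?D = "frechet_derivative f (at (y + s *\<^sub>R v))"
  have D: "(f has_derivative ?D) (at (y + s *\<^sub>R v))"
    using assms frechet_derivative_works by blast
  have "((\<lambda>s. y + s *\<^sub>R v) has_derivative (\<lambda>h. h *\<^sub>R v)) (at s)"
    by (auto intro!: derivative_eq_intros)
  from has_derivative_compose[OF this D]
  have "((\<lambda>s. f (y + s *\<^sub>R v)) has_derivative (\<lambda>h. ?D (h *\<^sub>R v))) (at s)" by simp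
  moreover have "(\<lambda>h. ?D (h *\<^sub>R v)) = (*) (?D v)"
    using has_derivative_linear[OF D] by (auto simp: linear_scale)
  ultimately show ?thesis by (simp add: has_field_derivative_def)
qed

lemma pd_has_real_derivative_along_axis:
  fixes f :: "real^'n \<Rightarrow> real"
  assumes "f differentiable at (y + s *\<^sub>R axis i 1)"
  shows "((\<lambda>s. f (y + s *\<^sub>R axis i 1)) has_real_derivative pd i f (y + s *\<^sub>R axis i 1)) (at s)"
  using has_real_derivative_along_line[OF assms] unfolding pd_def by simp

lemma mixed_second_difference_mvt:
  fixes f :: "real^'n \<Rightarrow> real"
  assumes S: "\<And>s t. 0 \<le> s \<Longrightarrow> s \<le> h \<Longrightarrow> 0 \<le> t \<Longrightarrow> t \<le> h \<Longrightarrow> x + s *\<^sub>R axis i 1 + t *\<^sub>R axis j 1 \<in> S"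
    and h: "0 < h"
    and df: "\<And>y. y \<in> S \<Longrightarrow> f differentiable at y"
    and dpf: "\<And>y. y \<in> S \<Longrightarrow> pd i f differentiable at y"
  shows "\<exists>s t. 0 < s \<and> s < h \<and> 0 < t \<and> t < h \<and>
     f (x + h *\<^sub>R axis i 1 + h *\<^sub>R axis j 1) - f (x + h *\<^sub>R axis i 1) - f (x + h *\<^sub>R axis j 1) + f x
      = h\<^sup>2 * pd j (pd i f) (x + s *\<^sub>R axis i 1 + t *\<^sub>R axis j 1)"
proof -
  let ?ei = "axis i 1 :: real^'n" and ?ej = "axis j 1 :: real^'n"
  define \<phi> where "\<phi> s = f (x + h *\<^sub>R ?ej + s *\<^sub>R ?ei) - f (x + s *\<^sub>R ?ei)" for s
  have "\<exists>s. 0 < s \<and> s < h \<and> \<phi> h - \<phi> 0 = (h - 0) *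
      (pd i f (x + h *\<^sub>R ?ej + s *\<^sub>R ?ei) - pd i f (x + s *\<^sub>R ?ei))"
  proof (rule MVT2[OF h])
    fix s assume s: "0 \<le> s" "s \<le> h"
    have "x + h *\<^sub>R ?ej + s *\<^sub>R ?ei \<in> S" "x + s *\<^sub>R ?ei \<in> S"
      using S[of s h] S[of s 0] s h by (simp_all add: algebra_simps)
    then show "(\<phi> has_real_derivative (pd i f (x + h *\<^sub>R ?ej + s *\<^sub>R ?ei) - pd i f (x + s *\<^sub>R ?ei))) (at s)"
      unfolding \<phi>_def by (intro DERIV_diff pd_has_real_derivative_along_axis df)
  qed
  then obtain s where s: "0 < s" "s < h" and e1: "\<phi> h - \<phi> 0 = h *
      (pd i f (x + h *\<^sub>R ?ej + s *\<^sub>R ?ei) - pd i f (x + s *\<^sub>R ?ei))" by auto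
  have "\<exists>t. 0 < t \<and> t < h \<and> pd i f (x + s *\<^sub>R ?ei + h *\<^sub>R ?ej) - pd i f (x + s *\<^sub>R ?ei + 0 *\<^sub>R ?ej)
      = (h - 0) * pd j (pd i f) (x + s *\<^sub>R ?ei + t *\<^sub>R ?ej)"
  proof (rule MVT2[OF h])
    fix t assume "0 \<le> t" "t \<le> h"
    then have "x + s *\<^sub>R ?ei + t *\<^sub>R ?ej \<in> S" using S[of s t] s by simp
    then show "((\<lambda>t. pd i f (x + s *\<^sub>R ?ei + t *\<^sub>R ?ej)) has_real_derivative
        pd j (pd i f) (x + s *\<^sub>R ?ei + t *\<^sub>R ?ej)) (at t)"
      by (intro pd_has_real_derivative_along_axis dpf)
  qed
  then obtain t where t: "0 < t" "t < h" and e2: "pd i f (x + s *\<^sub>R ?ei + h *\<^sub>R ?ej) - pd i f (x + s *\<^sub>R ?ei)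
      = h * pd j (pd i f) (x + s *\<^sub>R ?ei + t *\<^sub>R ?ej)" by auto
  have "f (x + h *\<^sub>R ?ei + h *\<^sub>R ?ej) - f (x + h *\<^sub>R ?ei) - f (x + h *\<^sub>R ?ej) + f x = \<phi> h - \<phi> 0"
    unfolding \<phi>_def by (simp add: algebra_simps)
  also have "\<dots> = h\<^sup>2 * pd j (pd i f) (x + s *\<^sub>R ?ei + t *\<^sub>R ?ej)"
    using e1 e2 by (simp add: algebra_simps power2_eq_square)
  finally show ?thesis using s t by blast
qed

lemma dist_add_axes_le:
  fixes x :: "real^'n"
  assumes "0 \<le> s" "0 \<le> t"
  shows "dist (x + s *\<^sub>R axis i 1 + t *\<^sub>R axis j 1) x \<le> s + t"
proof -
  have "norm (s *\<^sub>R axis i 1 + t *\<^sub>R axis j 1 :: real^'n) \<le> norm (s *\<^sub>R axis i 1 :: real^'n) + norm (t *\<^sub>R axis j 1 :: real^'n)"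
    by (rule norm_triangle_ineq)
  then show ?thesis using assms by (simp add: dist_norm add.assoc)
qed

text \<open>Schwarz's theorem: by the mean value theorem, both mixed partials are limits of the same
  second difference quotient.\<close>
lemma pd_pd_commute:
  fixes f :: "real^'n \<Rightarrow> real"
  assumes S: "open S" "x \<in> S"
    and df: "\<And>y. y \<in> S \<Longrightarrow> f differentiable at y"
    and dpf: "\<And>y k. y \<in> S \<Longrightarrow> pd k f differentiable at y"
    and cont: "\<And>k l. continuous_on S (pd l (pd k f))"
  shows "pd j (pd i f) x = pd i (pd j f) x"
proof (rule ccontr)
  let ?ei = "axis i 1 :: real^'n" and ?ej = "axis j 1 :: real^'n"
  assume ne: "pd j (pd i f) x \<noteq> pd i (pd j f) x"
  define e where "e = \<bar>pd j (pd i f) x - pd i (pd j f) x\<bar> / 2"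
  have e: "e > 0" using ne by (simp add: e_def)
  obtain r where r: "r > 0" "ball x r \<subseteq> S" using S open_contains_ball by blast
  have "continuous (at x) (pd j (pd i f))" "continuous (at x) (pd i (pd j f))"
    using cont S continuous_on_eq_continuous_at by blast+
  then obtain d1 d2 where d: "d1 > 0" "d2 > 0"
    and d1: "\<And>y. dist y x < d1 \<Longrightarrow> dist (pd j (pd i f) y) (pd j (pd i f) x) < e"
    and d2: "\<And>y. dist y x < d2 \<Longrightarrow> dist (pd i (pd j f) y) (pd i (pd j f) x) < e"
    using e unfolding continuous_at_eps_delta by metis
  define h where "h = Min {r, d1, d2} / 3"
  have h: "h > 0" "2 * h < r" "2 * h < d1" "2 * h < d2" using r d by (auto simp: h_def)
  have near: "dist (x + s *\<^sub>R ?ei + t *\<^sub>R ?ej) x \<le> 2 * h"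
    if "0 \<le> s" "s \<le> h" "0 \<le> t" "t \<le> h" for s t
    using dist_add_axes_le[of s t x i j] that by linarith
  have Sij: "x + s *\<^sub>R ?ei + t *\<^sub>R ?ej \<in> S" if "0 \<le> s" "s \<le> h" "0 \<le> t" "t \<le> h" for s t
    using near[OF that] h r by (auto simp: dist_commute)
  have Sji: "x + s *\<^sub>R ?ej + t *\<^sub>R ?ei \<in> S" if "0 \<le> s" "s \<le> h" "0 \<le> t" "t \<le> h" for s t
    using Sij[of t s] that by (simp add: algebra_simps)
  obtain s t where st: "0 < s" "s < h" "0 < t" "t < h" and E1:
     "f (x + h *\<^sub>R ?ei + h *\<^sub>R ?ej) - f (x + h *\<^sub>R ?ei) - f (x + h *\<^sub>R ?ej) + f x
      = h\<^sup>2 * pd j (pd i f) (x + s *\<^sub>R ?ei + t *\<^sub>R ?ej)"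
    using mixed_second_difference_mvt[of h x i j S f, OF Sij h(1) df dpf] by blast
  obtain s' t' where st': "0 < s'" "s' < h" "0 < t'" "t' < h" and E2:
     "f (x + h *\<^sub>R ?ej + h *\<^sub>R ?ei) - f (x + h *\<^sub>R ?ej) - f (x + h *\<^sub>R ?ei) + f x
      = h\<^sup>2 * pd i (pd j f) (x + s' *\<^sub>R ?ej + t' *\<^sub>R ?ei)"
    using mixed_second_difference_mvt[of h x j i S f, OF Sji h(1) df dpf] by blast
  have eq: "pd j (pd i f) (x + s *\<^sub>R ?ei + t *\<^sub>R ?ej) = pd i (pd j f) (x + t' *\<^sub>R ?ei + s' *\<^sub>R ?ej)"
    using E1 E2 h by (simp add: algebra_simps)
  have "dist (x + s *\<^sub>R ?ei + t *\<^sub>R ?ej) x < d1" "dist (x + t' *\<^sub>R ?ei + s' *\<^sub>R ?ej) x < d2"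
    using near[of s t] near[of t' s'] st st' h by linarith+
  then have "dist (pd j (pd i f) (x + s *\<^sub>R ?ei + t *\<^sub>R ?ej)) (pd j (pd i f) x) < e"
    and "dist (pd i (pd j f) (x + t' *\<^sub>R ?ei + s' *\<^sub>R ?ej)) (pd i (pd j f) x) < e"
    using d1 d2 by blast+
  then have "\<bar>pd j (pd i f) x - pd i (pd j f) x\<bar> < 2 * e"
    using eq by (simp add: dist_real_def)
  then show False by (simp add: e_def)
qed

lemma sum_axis_scaleR: "(\<Sum>i\<in>UNIV. (h $ i) *\<^sub>R axis i 1) = (h :: real^'n)"
  using basis_expansion[of h] by (simp add: scalar_mult_eq_scaleR)

lemma linear_eq_sum_axis:
  fixes L :: "real^'n \<Rightarrow> real"
  assumes "linear L"
  shows "L h = (\<Sum>i\<in>UNIV. h $ i * L (axis i 1))"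
proof -
  have "L h = L (\<Sum>i\<in>UNIV. (h $ i) *\<^sub>R axis i 1)" by (simp add: sum_axis_scaleR)
  also have "\<dots> = (\<Sum>i\<in>UNIV. h $ i * L (axis i 1))"
    using assms by (simp add: linear_sum linear_scale)
  finally show ?thesis .
qed

lemma frechet_derivative_eq_sum_pd:
  fixes f :: "real^'n \<Rightarrow> real"
  assumes "f differentiable at y"
  shows "frechet_derivative f (at y) h = (\<Sum>i\<in>UNIV. h $ i * pd i f y)"
  unfolding pd_def
  using assms frechet_derivative_works has_derivative_linear linear_eq_sum_axis by blast

lemma grad_eq_sum_axis: "grad f y = (\<Sum>i\<in>UNIV. pd i f y *\<^sub>R axis i 1)"
  using sum_axis_scaleR[of "grad f y"] by (simp add: grad_def)

lemma has_derivative_zero_at_max: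
  fixes f :: "'a::real_normed_vector \<Rightarrow> real"
  assumes "open S" "x \<in> S" "\<And>y. y \<in> S \<Longrightarrow> f y \<le> f x" "f differentiable at x"
  shows "(f has_derivative (\<lambda>_. 0)) (at x)"
  using differential_zero_maxmin[OF assms(2,1)] assms(3,4) unfolding differentiable_def by blast

text \<open>Otherwise the directional derivative along \<open>h\<close>, which vanishes at \<open>x\<close>, would be
  positive just after \<open>x\<close>.\<close>
lemma hessian_form_nonpos_at_max:
  fixes f :: "real^'n \<Rightarrow> real"
  assumes S: "open S" "x \<in> S" and max: "\<And>y. y \<in> S \<Longrightarrow> f y \<le> f x"
    and df: "\<And>y. y \<in> S \<Longrightarrow> f differentiable at y"
    and dpf: "\<And>i. pd i f differentiable at x"
  shows "(\<Sum>i\<in>UNIV. h $ i * frechet_derivative (pd i f) (at x) h) \<le> 0"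
proof (rule ccontr)
  define \<psi> where "\<psi> s = (\<Sum>i\<in>UNIV. h $ i * pd i f (x + s *\<^sub>R h))" for s
  assume "\<not> ?thesis"
  then have pos: "0 < (\<Sum>i\<in>UNIV. h $ i * frechet_derivative (pd i f) (at x) h)" by simp
  have "(\<psi> has_real_derivative (\<Sum>i\<in>UNIV. h $ i * frechet_derivative (pd i f) (at x) h)) (at 0)"
    unfolding \<psi>_def using has_real_derivative_along_line[of "pd _ f" x 0 h] dpf
    by (intro DERIV_sum DERIV_cmult) simp
  from DERIV_pos_inc_right[OF this pos] obtain d
    where d: "d > 0" and inc: "\<And>s. 0 < s \<Longrightarrow> s < d \<Longrightarrow> \<psi> 0 < \<psi> s" by auto
  have "\<psi> 0 = 0"
    using frechet_derivative_at[OF has_derivative_zero_at_max[OF S max df[OF S(2)]], symmetric]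
      frechet_derivative_eq_sum_pd[OF df[OF S(2)], of h]
    by (simp add: \<psi>_def)
  with inc have \<psi>_pos: "\<And>s. 0 < s \<Longrightarrow> s < d \<Longrightarrow> 0 < \<psi> s" by simp
  have "open ((\<lambda>s. x + s *\<^sub>R h) -` S)"
    using S(1) by (intro continuous_open_vimage) (auto intro!: continuous_intros)
  moreover have "0 \<in> (\<lambda>s. x + s *\<^sub>R h) -` S" using S(2) by simp
  ultimately obtain r where r: "r > 0" "ball 0 r \<subseteq> (\<lambda>s. x + s *\<^sub>R h) -` S"
    using open_contains_ball by blast
  define s0 where "s0 = min (d / 2) (r / 2)"
  have s0: "0 < s0" "s0 < d" using d r by (auto simp: s0_def)
  have line: "x + s *\<^sub>R h \<in> S" if "0 \<le> s" "s \<le> s0" for s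
  proof -
    have "s \<in> ball 0 r" using that r by (simp add: s0_def dist_norm)
    then show ?thesis using r by auto
  qed
  have deriv: "((\<lambda>s. f (x + s *\<^sub>R h)) has_real_derivative \<psi> s) (at s)" if "0 \<le> s" "s \<le> s0" for s
    using has_real_derivative_along_line[of f x s h] frechet_derivative_eq_sum_pd[of f "x + s *\<^sub>R h" h]
      df line[OF that] by (simp add: \<psi>_def)
  have "f (x + 0 *\<^sub>R h) < f (x + s0 *\<^sub>R h)"
  proof (rule DERIV_pos_imp_increasing_open[OF s0(1)])
    show "\<exists>y. ((\<lambda>s. f (x + s *\<^sub>R h)) has_real_derivative y) (at s) \<and> 0 < y" if "0 < s" "s < s0" for s
      using deriv[of s] \<psi>_pos[of s] that s0 by auto
    show "continuous_on {0..s0} (\<lambda>s. f (x + s *\<^sub>R h))"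
      using deriv by (intro continuous_at_imp_continuous_on ballI DERIV_isCont) auto
  qed
  moreover have "f (x + s0 *\<^sub>R h) \<le> f x" using max line[of s0] s0 by simp
  ultimately show False by simp
qed

definition C2_on :: "(real^'n) set \<Rightarrow> (real^'n \<Rightarrow> real) \<Rightarrow> bool" where
  "C2_on S f \<longleftrightarrow> (\<forall>y\<in>S. f differentiable at y \<and> (\<forall>i. pd i f differentiable at y)) \<and>
     (\<forall>i j. continuous_on S (pd j (pd i f)))"

lemma has_derivative_grad:
  fixes f :: "real^'n \<Rightarrow> real"
  assumes "\<And>i. pd i f differentiable at x"
  shows "(grad f has_derivative (\<lambda>h. \<chi> i. frechet_derivative (pd i f) (at x) h)) (at x)"
proof -
  have grad: "grad f = (\<lambda>y. \<Sum>i\<in>UNIV. pd i f y *\<^sub>R axis i 1)"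
    by (simp add: fun_eq_iff grad_eq_sum_axis)
  have deriv: "((\<lambda>y. \<Sum>i\<in>UNIV. pd i f y *\<^sub>R axis i 1) has_derivative
      (\<lambda>h. \<Sum>i\<in>UNIV. frechet_derivative (pd i f) (at x) h *\<^sub>R axis i 1)) (at x)"
    using assms frechet_derivative_works by (intro has_derivative_sum has_derivative_scaleR_left) blast
  have eq: "(\<lambda>h. \<Sum>i\<in>UNIV. frechet_derivative (pd i f) (at x) h *\<^sub>R axis i 1)
      = (\<lambda>h. \<chi> i. frechet_derivative (pd i f) (at x) h)"
  proof
    fix h
    show "(\<Sum>i\<in>UNIV. frechet_derivative (pd i f) (at x) h *\<^sub>R axis i 1)
      = (\<chi> i. frechet_derivative (pd i f) (at x) h)"
      using sum_axis_scaleR[of "\<chi> i. frechet_derivative (pd i f) (at x) h"] by simp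
  qed
  show ?thesis unfolding grad by (rule has_derivative_eq_rhs[OF deriv eq])
qed

lemma inner_hessian_commute:
  fixes f :: "real^'n \<Rightarrow> real"
  assumes S: "open S" "x \<in> S" and f: "C2_on S f"
  shows "h \<bullet> (\<chi> i. frechet_derivative (pd i f) (at x) h') = h' \<bullet> (\<chi> i. frechet_derivative (pd i f) (at x) h)"
proof -
  have df: "\<And>y. y \<in> S \<Longrightarrow> f differentiable at y" and dpf: "\<And>y i. y \<in> S \<Longrightarrow> pd i f differentiable at y"
    and cont: "\<And>i j. continuous_on S (pd j (pd i f))"
    using f by (auto simp: C2_on_def)
  have H: "h \<bullet> (\<chi> i. frechet_derivative (pd i f) (at x) h')
      = (\<Sum>i\<in>UNIV. \<Sum>j\<in>UNIV. h $ i * h' $ j * pd j (pd i f) x)" for h h'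
    using frechet_derivative_eq_sum_pd[OF dpf[OF S(2)]]
    by (simp add: inner_vec_def sum_distrib_left mult.assoc)
  have "h \<bullet> (\<chi> i. frechet_derivative (pd i f) (at x) h')
      = (\<Sum>j\<in>UNIV. \<Sum>i\<in>UNIV. h $ i * h' $ j * pd j (pd i f) x)"
    unfolding H by (rule sum.swap)
  also have "\<dots> = (\<Sum>j\<in>UNIV. \<Sum>i\<in>UNIV. h' $ j * h $ i * pd i (pd j f) x)"
  proof (intro sum.cong refl)
    fix i j
    show "h $ i * h' $ j * pd j (pd i f) x = h' $ j * h $ i * pd i (pd j f) x"
      using pd_pd_commute[OF S df dpf cont, of j i] by simp
  qed
  also have "\<dots> = h' \<bullet> (\<chi> i. frechet_derivative (pd i f) (at x) h)" unfolding H ..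
  finally show ?thesis .
qed

section \<open>The nonlinearity and the inverse of \<open>F\<^sub>z\<close>\<close>

lemma exponent_pos:
  assumes alpha0: "\<alpha> 0 = 0" and mono: "\<And>i. i < N \<Longrightarrow> \<alpha> i < \<alpha> (Suc i)"
  shows "0 < i \<Longrightarrow> i \<le> N \<Longrightarrow> (0::real) < \<alpha> i"
proof (induction i)
  case (Suc i)
  then show ?case using mono[of i] alpha0 by (cases "i = 0") auto
qed simp

lemma exponent_nonneg:
  assumes "\<alpha> 0 = 0" and "\<And>i. i < N \<Longrightarrow> \<alpha> i < \<alpha> (Suc i)" and "i \<le> N"
  shows "(0::real) \<le> \<alpha> i"
  using exponent_pos[of \<alpha> N i, OF assms(1,2)] assms(1,3) by (cases "i = 0") (auto intro: less_imp_le)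

lemma pw_nonneg: "0 \<le> pw s \<alpha>"
  by (simp add: pw_def)

lemma gfun_split_first:
  "gfun N a \<alpha> s = a 0 * pw s (\<alpha> 0) + (\<Sum>i=Suc 0..N. a i * pw s (\<alpha> i))"
  unfolding gfun_def by (simp add: sum.atLeast_Suc_atMost)

lemma first_coeff_le_gfun:
  assumes "\<And>i. i \<le> N \<Longrightarrow> a i > 0" and "\<alpha> 0 = 0"
  shows "a 0 \<le> gfun N a \<alpha> s"
proof -
  have "0 \<le> (\<Sum>i=Suc 0..N. a i * pw s (\<alpha> i))"
    using assms(1) by (intro sum_nonneg) (simp add: pw_nonneg less_imp_le)
  then show ?thesis using assms(2) by (simp add: gfun_split_first pw_def)
qed

lemma gfun_zero:
  assumes alpha0: "\<alpha> 0 = 0" and mono: "\<And>i. i < N \<Longrightarrow> \<alpha> i < \<alpha> (Suc i)"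
  shows "gfun N a \<alpha> 0 = a 0"
proof -
  have "a i * pw 0 (\<alpha> i) = 0" if "i \<in> {Suc 0..N}" for i
    using exponent_pos[of \<alpha> N i, OF alpha0 mono] that by (simp add: pw_def)
  then have "(\<Sum>i=Suc 0..N. a i * pw 0 (\<alpha> i)) = 0" by (rule sum.neutral[OF ballI])
  then show ?thesis using alpha0 by (simp add: gfun_split_first pw_def)
qed

lemma continuous_on_pw:
  assumes "0 \<le> \<alpha>" "continuous_on S f" "\<And>x. x \<in> S \<Longrightarrow> 0 \<le> f x"
  shows "continuous_on S (\<lambda>x. pw (f x) \<alpha>)"
  using assms by (cases "\<alpha> = 0") (auto simp: pw_def intro!: continuous_on_powr')

lemma continuous_on_gfun:
  assumes "\<And>i. i \<le> N \<Longrightarrow> (0::real) \<le> \<alpha> i" "continuous_on S f" "\<And>x. x \<in> S \<Longrightarrow> 0 \<le> f x"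
  shows "continuous_on S (\<lambda>x. gfun N a \<alpha> (f x))"
  unfolding gfun_def using assms
  by (intro continuous_on_sum continuous_on_mult continuous_on_const continuous_on_pw) auto

text \<open>\<open>g'(s)\<close>; only meaningful for \<open>s > 0\<close>.\<close>
definition gfun_deriv :: "nat \<Rightarrow> (nat \<Rightarrow> real) \<Rightarrow> (nat \<Rightarrow> real) \<Rightarrow> real \<Rightarrow> real" where
  "gfun_deriv N a \<alpha> s = (\<Sum>i=0..N. a i * (if \<alpha> i = 0 then 0 else \<alpha> i * s powr (\<alpha> i - 1)))"

lemma pw_has_real_derivative:
  assumes "s > 0"
  shows "((\<lambda>s. pw s \<alpha>) has_real_derivative (if \<alpha> = 0 then 0 else \<alpha> * s powr (\<alpha> - 1))) (at s)"
proof (cases "\<alpha> = 0")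
  case False
  then have "(\<lambda>s. pw s \<alpha>) = (\<lambda>s. s powr \<alpha>)" by (simp add: pw_def fun_eq_iff)
  then show ?thesis using False has_real_derivative_powr[OF assms] by simp
qed (simp add: pw_def)

lemma gfun_has_real_derivative:
  assumes "s > 0"
  shows "(gfun N a \<alpha> has_real_derivative gfun_deriv N a \<alpha> s) (at s)"
proof -
  have "((\<lambda>s. \<Sum>i=0..N. a i * pw s (\<alpha> i)) has_real_derivative gfun_deriv N a \<alpha> s) (at s)"
    unfolding gfun_deriv_def by (intro DERIV_sum DERIV_cmult pw_has_real_derivative assms)
  then show ?thesis by (simp add: gfun_def[abs_def])
qed

lemma gfun_deriv_nonneg:
  assumes "\<And>i. i \<le> N \<Longrightarrow> a i > 0" "\<And>i. i \<le> N \<Longrightarrow> (0::real) \<le> \<alpha> i"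
  shows "0 \<le> gfun_deriv N a \<alpha> s"
  unfolding gfun_deriv_def using assms by (intro sum_nonneg) (simp add: less_imp_le)

text \<open>The derivative of \<open>v \<mapsto> g(|v|) v\<close> is \<open>g(|w|) I + \<beta> w w\<^sup>T\<close> with \<open>\<beta> = g'(|w|)/|w| \<ge> 0\<close>;
  at \<open>w = 0\<close> it is \<open>g(0) I\<close>, by continuity of \<open>g\<close> alone.\<close>
lemma has_derivative_gfun_norm_scaleR:
  fixes w :: "'v::real_inner"
  assumes a_pos: "\<And>i. i \<le> N \<Longrightarrow> a i > 0" and alpha0: "\<alpha> 0 = 0"
    and mono: "\<And>i. i < N \<Longrightarrow> \<alpha> i < \<alpha> (Suc i)"
  shows "\<exists>\<beta>\<ge>0. ((\<lambda>v. gfun N a \<alpha> (norm v) *\<^sub>R v) has_derivative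
            (\<lambda>h. gfun N a \<alpha> (norm w) *\<^sub>R h + (\<beta> * (w \<bullet> h)) *\<^sub>R w)) (at w)"
proof (cases "w = 0")
  case True
  let ?g = "\<lambda>v::'v. gfun N a \<alpha> (norm v)"
  have g0: "gfun N a \<alpha> 0 = a 0" using gfun_zero[OF alpha0 mono] .
  have "continuous_on UNIV ?g"
    using exponent_nonneg[OF alpha0 mono] by (intro continuous_on_gfun continuous_intros) auto
  then have "isCont ?g 0" using continuous_on_eq_continuous_at open_UNIV by blast
  then have "(?g \<longlongrightarrow> a 0) (at 0)" using g0 by (simp add: isCont_def)
  then have lim: "((\<lambda>v. \<bar>?g v - a 0\<bar>) \<longlongrightarrow> 0) (at 0)"
    by (intro tendsto_rabs_zero LIM_zero)
  have "((\<lambda>v. ?g v *\<^sub>R v) has_derivative (\<lambda>h. a 0 *\<^sub>R h)) (at 0)"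
    unfolding has_derivative_at
  proof
    show "bounded_linear (\<lambda>h::'v. a 0 *\<^sub>R h)" by (rule bounded_linear_scaleR_right)
    have "\<forall>\<^sub>F h in at 0. \<bar>?g h - a 0\<bar> = norm (?g (0 + h) *\<^sub>R (0 + h) - ?g 0 *\<^sub>R 0 - a 0 *\<^sub>R h) / norm h"
      by (auto simp: eventually_at scaleR_diff_left[symmetric] intro!: exI[of _ 1])
    from Lim_transform_eventually[OF lim this]
    show "(\<lambda>h. norm (?g (0 + h) *\<^sub>R (0 + h) - ?g 0 *\<^sub>R 0 - a 0 *\<^sub>R h) / norm h) \<midarrow>0\<rightarrow> 0" .
  qed
  then show ?thesis using True g0 by (intro exI[of _ 0]) simp
next
  case False
  let ?g' = "gfun_deriv N a \<alpha> (norm w)"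
  have "(gfun N a \<alpha> has_derivative (*) ?g') (at (norm w))"
    using gfun_has_real_derivative[of "norm w"] False by (simp add: has_field_derivative_def)
  from has_derivative_compose[OF has_derivative_norm[OF False] this]
  have "((\<lambda>v. gfun N a \<alpha> (norm v)) has_derivative (\<lambda>h. ?g' * (h \<bullet> sgn w))) (at w)" by simp
  from has_derivative_scaleR[OF this has_derivative_ident]
  have "((\<lambda>v. gfun N a \<alpha> (norm v) *\<^sub>R v) has_derivative
      (\<lambda>h. gfun N a \<alpha> (norm w) *\<^sub>R h + ((?g' / norm w) * (w \<bullet> h)) *\<^sub>R w)) (at w)"
    by (simp add: sgn_div_norm inner_commute divide_inverse ac_simps)
  moreover have "0 \<le> ?g' / norm w"
    using gfun_deriv_nonneg[OF a_pos exponent_nonneg[OF alpha0 mono]] by simp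
  ultimately show ?thesis by blast
qed

lemma linear_cross3: "linear (cross3 k)"
  by (rule linearI) (simp_all add: cross_add_right cross_mult_right)

lemma cross3_cross3: "cross3 k (cross3 k y) = (k \<bullet> y) *\<^sub>R k - (k \<bullet> k) *\<^sub>R y"
  by (simp add: vec_eq_iff forall_3 cross_components inner_vec_def sum_3 algebra_simps)

lemma inner_cross3_skew: "x \<bullet> cross3 k y + y \<bullet> cross3 k x = 0"
  by (simp add: inner_vec_def sum_3 cross_components algebra_simps)
lemma inner_cross3_cross3: "x \<bullet> cross3 k (cross3 k y) = (k \<bullet> x) * (k \<bullet> y) - (k \<bullet> k) * (x \<bullet> y)"
  by (simp add: cross3_cross3 inner_diff_right inner_commute)

lemma inner_cross3_cross3_self_nonpos: "h \<bullet> cross3 k (cross3 k h) \<le> 0"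
  using Cauchy_Schwarz_ineq[of k h] by (simp add: inner_cross3_cross3 power2_eq_square)

text \<open>Inverse of \<open>v \<mapsto> g v + z k \<times> v\<close> for a fixed scalar \<open>g > 0\<close>: split \<open>y\<close> into its component
  along \<open>k\<close> and the orthogonal part \<open>p\<close>, on which \<open>k \<times> \<cdot>\<close> acts as a rotation by \<open>\<pi>/2\<close>.\<close>
lemma scaleR_plus_cross3_solve:
  fixes k y :: "real^3" and g z :: real
  assumes k: "norm k = 1" and g: "g > 0"
  defines "c \<equiv> k \<bullet> y" and "p \<equiv> y - (k \<bullet> y) *\<^sub>R k" and "q \<equiv> cross3 k y"
  defines "v \<equiv> (c / g) *\<^sub>R k + (1 / (g\<^sup>2 + z\<^sup>2)) *\<^sub>R (g *\<^sub>R p - z *\<^sub>R q)"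
  shows "g *\<^sub>R v + z *\<^sub>R cross3 k v = y"
    and "(norm v)\<^sup>2 = c\<^sup>2 / g\<^sup>2 + (norm p)\<^sup>2 / (g\<^sup>2 + z\<^sup>2)"
proof -
  have kk: "k \<bullet> k = 1" using k by (simp add: norm_eq_1)
  have kp: "cross3 k p = q" unfolding p_def q_def by (simp add: vec_eq_iff forall_3 cross_components algebra_simps)
  have kq: "cross3 k q = - p" unfolding p_def q_def by (simp add: cross3_cross3 kk)
  have orth: "k \<bullet> p = 0" "k \<bullet> q = 0" "p \<bullet> q = 0" "q \<bullet> p = 0"
    unfolding p_def q_def by (simp_all add: inner_diff_left inner_diff_right kk inner_commute dot_cross_self)
  have qq: "q \<bullet> q = p \<bullet> p"
  proof -
    have "(norm q)\<^sup>2 + c\<^sup>2 = (norm y)\<^sup>2" using norm_cross_dot[of k y] k unfolding q_def c_def by simp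
    moreover have "p \<bullet> p = y \<bullet> y - c\<^sup>2" unfolding p_def c_def
      by (simp add: inner_diff_left inner_diff_right kk inner_commute power2_eq_square)
    ultimately show ?thesis by (simp add: power2_norm_eq_inner)
  qed
  have gz: "g\<^sup>2 + z\<^sup>2 > 0" using g by (simp add: add_pos_nonneg)
  define s where "s = 1 / (g\<^sup>2 + z\<^sup>2)"
  have "cross3 k v = s *\<^sub>R (g *\<^sub>R cross3 k p - z *\<^sub>R cross3 k q)"
    unfolding v_def s_def[symmetric] by (simp add: vec_eq_iff forall_3 cross_components algebra_simps)
  then have kv: "cross3 k v = s *\<^sub>R (g *\<^sub>R q + z *\<^sub>R p)"
    by (simp add: kp kq algebra_simps)
  have "g\<^sup>2 + z\<^sup>2 \<noteq> 0" using gz by (metis less_irrefl)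
  then have s1: "s * (g\<^sup>2 + z\<^sup>2) = 1" by (simp add: s_def)
  have "g *\<^sub>R v + z *\<^sub>R cross3 k v = c *\<^sub>R k + (s * (g\<^sup>2 + z\<^sup>2)) *\<^sub>R p"
    unfolding kv unfolding v_def s_def[symmetric] using g by (simp add: algebra_simps power2_eq_square)
  also have "\<dots> = y" unfolding s1 p_def c_def by simp
  finally show "g *\<^sub>R v + z *\<^sub>R cross3 k v = y" .
  have "(norm v)\<^sup>2 = (c / g)\<^sup>2 + s\<^sup>2 * (g\<^sup>2 * (p \<bullet> p) + z\<^sup>2 * (q \<bullet> q))"
    unfolding power2_norm_eq_inner v_def s_def[symmetric]
    by (simp add: inner_add_left inner_add_right inner_diff_left inner_diff_right inner_commute
        orth kk power2_eq_square algebra_simps)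
  also have "\<dots> = (c / g)\<^sup>2 + s * (s * (g\<^sup>2 + z\<^sup>2)) * (norm p)\<^sup>2"
    unfolding power2_norm_eq_inner by (simp add: qq power2_eq_square algebra_simps)
  also have "\<dots> = c\<^sup>2 / g\<^sup>2 + (norm p)\<^sup>2 / (g\<^sup>2 + z\<^sup>2)"
    by (simp add: s1 s_def power_divide)
  finally show "(norm v)\<^sup>2 = c\<^sup>2 / g\<^sup>2 + (norm p)\<^sup>2 / (g\<^sup>2 + z\<^sup>2)" .
qed

text \<open>The equation \<open>|v| = r\<close> for the solution \<open>v\<close> above with \<open>g = g(r)\<close>, solved by the
  intermediate value theorem on \<open>[0, |y|/a\<^sub>0]\<close>.\<close>
lemma radius_equation_has_root:
  fixes g :: "real \<Rightarrow> real"
  assumes cont: "continuous_on {0..} g" and ge: "\<And>r. a0 \<le> g r" and a0: "0 < a0"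
  shows "\<exists>r\<ge>0. r\<^sup>2 = c\<^sup>2 / (g r)\<^sup>2 + p\<^sup>2 / ((g r)\<^sup>2 + z\<^sup>2)"
proof -
  define \<phi> where "\<phi> r = r\<^sup>2 - (c\<^sup>2 / (g r)\<^sup>2 + p\<^sup>2 / ((g r)\<^sup>2 + z\<^sup>2))" for r
  define R where "R = sqrt (c\<^sup>2 + p\<^sup>2) / a0"
  have gpos: "0 < g r" for r using ge[of r] a0 by linarith
  have pos: "0 < (g r)\<^sup>2" "0 < (g r)\<^sup>2 + z\<^sup>2" for r
    using gpos[of r] by (simp_all add: add_pos_nonneg)
  then have nz: "(g r)\<^sup>2 \<noteq> 0" "(g r)\<^sup>2 + z\<^sup>2 \<noteq> 0" for r
    by (metis less_irrefl)+
  have R: "0 \<le> R" using a0 by (simp add: R_def)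
  have "continuous_on {0..R} g" using continuous_on_subset[OF cont] by auto
  then have "continuous_on {0..R} \<phi>"
    unfolding \<phi>_def using nz by (intro continuous_intros) auto
  moreover have "\<phi> 0 \<le> 0"
  proof -
    have "0 \<le> c\<^sup>2 / (g 0)\<^sup>2" "0 \<le> p\<^sup>2 / ((g 0)\<^sup>2 + z\<^sup>2)"
      using pos[of 0] by (auto intro!: divide_nonneg_pos)
    moreover have "\<phi> 0 = - (c\<^sup>2 / (g 0)\<^sup>2 + p\<^sup>2 / ((g 0)\<^sup>2 + z\<^sup>2))" by (simp add: \<phi>_def)
    ultimately show ?thesis by linarith
  qed
  moreover have "0 \<le> \<phi> R"
  proof -
    have sq: "a0\<^sup>2 \<le> (g R)\<^sup>2" using ge[of R] a0 by (simp add: power_mono)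
    have "c\<^sup>2 / (g R)\<^sup>2 \<le> c\<^sup>2 / a0\<^sup>2"
      using sq a0 pos(1)[of R] by (intro divide_left_mono) (auto intro: mult_pos_pos)
    moreover have "p\<^sup>2 / ((g R)\<^sup>2 + z\<^sup>2) \<le> p\<^sup>2 / a0\<^sup>2"
      using sq a0 pos(2)[of R] by (intro divide_left_mono) (auto intro: add_increasing2 mult_pos_pos)
    moreover have "R\<^sup>2 = c\<^sup>2 / a0\<^sup>2 + p\<^sup>2 / a0\<^sup>2"
      by (simp add: R_def power_divide add_divide_distrib)
    ultimately show ?thesis unfolding \<phi>_def by linarith
  qed
  ultimately obtain r where "0 \<le> r" "\<phi> r = 0"
    using IVT'[of \<phi> 0 0 R] R by auto
  then show ?thesis by (auto simp: \<phi>_def)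
qed

lemma Ffun_inv_right:
  assumes k: "norm k = 1" and a_pos: "\<And>i. i \<le> N \<Longrightarrow> a i > 0" and alpha0: "\<alpha> 0 = 0"
    and mono: "\<And>i. i < N \<Longrightarrow> \<alpha> i < \<alpha> (Suc i)"
  shows "Ffun N a \<alpha> k z (inv (Ffun N a \<alpha> k z) y) = y"
proof -
  let ?g = "gfun N a \<alpha>"
  define c where "c = k \<bullet> y"
  define p where "p = y - (k \<bullet> y) *\<^sub>R k"
  have ge: "a 0 \<le> ?g r" for r using first_coeff_le_gfun[of N a \<alpha>, OF a_pos alpha0] .
  have "continuous_on {0..} ?g"
    using continuous_on_gfun[of N \<alpha> "{0..}" "\<lambda>r. r"] exponent_nonneg[OF alpha0 mono] by auto
  then obtain r where r: "0 \<le> r" "r\<^sup>2 = c\<^sup>2 / (?g r)\<^sup>2 + (norm p)\<^sup>2 / ((?g r)\<^sup>2 + z\<^sup>2)"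
    using radius_equation_has_root[of ?g "a 0" c "norm p" z] ge a_pos[of 0] by blast
  define v where "v = (c / ?g r) *\<^sub>R k + (1 / ((?g r)\<^sup>2 + z\<^sup>2)) *\<^sub>R (?g r *\<^sub>R p - z *\<^sub>R cross3 k y)"
  have gpos: "0 < ?g r" using ge[of r] a_pos[of 0] by linarith
  have solve: "?g r *\<^sub>R v + z *\<^sub>R cross3 k v = y"
    "(norm v)\<^sup>2 = c\<^sup>2 / (?g r)\<^sup>2 + (norm p)\<^sup>2 / ((?g r)\<^sup>2 + z\<^sup>2)"
    unfolding v_def c_def p_def by (rule scaleR_plus_cross3_solve[OF k gpos])+
  have "(norm v)\<^sup>2 = r\<^sup>2" using solve(2) r(2) by simp
  then have "norm v = r" using r(1) by (simp add: power2_eq_iff_nonneg)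
  then have "Ffun N a \<alpha> k z v = y" using solve(1) by (simp add: Ffun_def)
  then show ?thesis by (metis f_inv_into_f rangeI)
qed

section \<open>Linear algebra\<close>

lemma trace_transpose: "trace (transpose X) = trace (X :: real^'n^'n)"
  by (simp add: trace_def transpose_def)

lemma matrix_add_rdistrib: "(A + B) ** C = A ** C + B ** (C :: real^'n^'n)"
  for A B :: "real^'n^'n"
  by (simp add: matrix_matrix_mult_def vec_eq_iff sum.distrib algebra_simps)

lemma trace_transpose_mult_mult_nonpos:
  fixes X M :: "real^'n^'n"
  assumes "\<And>h. h \<bullet> (M *v h) \<le> 0"
  shows "trace (transpose X ** M ** X) \<le> 0"
proof -
  have "(transpose X ** M ** X) $ i $ i = column i X \<bullet> (M *v column i X)" for i
  proof -
    have "(transpose X ** M ** X) $ i $ i = (\<Sum>j\<in>UNIV. \<Sum>k\<in>UNIV. X $ k $ i * (M $ k $ j * X $ j $ i))"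
      by (simp add: matrix_matrix_mult_def transpose_def sum_distrib_right mult.assoc)
    also have "\<dots> = (\<Sum>k\<in>UNIV. X $ k $ i * (\<Sum>j\<in>UNIV. M $ k $ j * X $ j $ i))"
      by (subst sum.swap) (simp add: sum_distrib_left)
    also have "\<dots> = column i X \<bullet> (M *v column i X)"
      by (simp add: matrix_vector_mult_def inner_vec_def column_def)
    finally show ?thesis .
  qed
  then show ?thesis unfolding trace_def using assms by (simp add: sum_nonpos)
qed

text \<open>From \<open>C A = I\<close> we get \<open>C + C\<^sup>T = C (A + A\<^sup>T) C\<^sup>T\<close>, and for symmetric \<open>M\<close>,
  \<open>2 tr(C M) = tr((C + C\<^sup>T) M)\<close> is then a nonnegative combination of traces of the form
  \<open>tr(X X\<^sup>T M) = tr(X\<^sup>T M X)\<close>.\<close>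
lemma trace_left_inverse_mult_nonpos:
  fixes A C M :: "real^'n^'n" and w :: "real^'n"
  assumes CA: "C ** A = mat 1"
    and A_sym: "A + transpose A = (2 * g) *\<^sub>R mat 1 + (2 * \<beta>) *\<^sub>R (\<chi> i j. w $ i * w $ j)"
    and M_sym: "transpose M = M" and M_nonpos: "\<And>h. h \<bullet> (M *v h) \<le> 0"
    and g: "0 \<le> g" and \<beta>: "0 \<le> \<beta>"
  shows "trace (C ** M) \<le> 0"
proof -
  obtain j0 :: 'n where True by blast
  define Wm :: "real^'n^'n" where "Wm = (\<chi> i j. if j = j0 then w $ i else 0)"
  have wwT: "(\<chi> i j. w $ i * w $ j) = Wm ** transpose Wm"
    by (simp add: Wm_def matrix_matrix_mult_def transpose_def vec_eq_iff if_distrib sum.delta' cong: if_cong)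
  have XXT: "trace (X ** transpose X ** M) \<le> 0" for X :: "real^'n^'n"
    using trace_transpose_mult_mult_nonpos[OF M_nonpos, of X]
    by (metis matrix_mul_assoc trace_mul_sym)
  have e1: "C ** A ** transpose C = transpose C" using CA by simp
  then have e2: "C ** transpose A ** transpose C = C"
    by (metis matrix_transpose_mul matrix_mul_assoc transpose_transpose)
  have "C + transpose C = C ** (A + transpose A) ** transpose C"
    using e1 e2 by (simp add: matrix_add_ldistrib matrix_add_rdistrib)
  also have "\<dots> = (2 * g) *\<^sub>R (C ** transpose C) + (2 * \<beta>) *\<^sub>R ((C ** Wm) ** transpose (C ** Wm))"
    unfolding A_sym wwT
    by (simp add: matrix_add_ldistrib matrix_add_rdistrib matrix_scalar_ac scalar_matrix_assoc
        matrix_transpose_mul matrix_mul_assoc)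
  finally have CCT: "C + transpose C
      = (2 * g) *\<^sub>R (C ** transpose C) + (2 * \<beta>) *\<^sub>R ((C ** Wm) ** transpose (C ** Wm))" .
  have "trace (C ** M) = trace (transpose C ** M)"
    by (metis M_sym matrix_transpose_mul trace_mul_sym trace_transpose)
  then have "2 * trace (C ** M) = trace ((C + transpose C) ** M)"
    by (simp add: matrix_add_rdistrib trace_add)
  also have "\<dots> = (2 * g) * trace (C ** transpose C ** M)
      + (2 * \<beta>) * trace ((C ** Wm) ** transpose (C ** Wm) ** M)"
    unfolding CCT
    by (simp add: matrix_add_rdistrib trace_add scalar_matrix_assoc[symmetric] trace_def
        sum.distrib sum_distrib_left)
  also have "\<dots> \<le> 0"
    using XXT[of C] XXT[of "C ** Wm"] g \<beta> by (simp add: add_nonpos_nonpos mult_nonneg_nonpos)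
  finally show ?thesis by simp
qed

lemma inj_if_coercive:
  fixes A :: "'a::real_inner \<Rightarrow> 'a"
  assumes A: "linear A" and g: "0 < g" and coercive: "\<And>x. g * (x \<bullet> x) \<le> x \<bullet> A x"
  shows "inj A"
proof (rule injI)
  fix x y assume "A x = A y"
  then have "g * ((x - y) \<bullet> (x - y)) \<le> 0" using coercive[of "x - y"] A by (simp add: linear_diff)
  then have "(x - y) \<bullet> (x - y) \<le> 0" using g by (simp add: mult_le_0_iff)
  then show "x = y" by (metis antisym inner_ge_zero inner_eq_zero_iff right_minus_eq)
qed

lemma matrix_nth_eq_inner_axis: "matrix L $ i $ j = axis i 1 \<bullet> L (axis j 1)"
  by (simp add: matrix_def inner_axis')

text \<open>\<open>A\<close> is invertible because its symmetric part is positive definite.\<close>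
lemma trace_nonpos_of_factorization:
  fixes A D M :: "real^'n \<Rightarrow> real^'n" and w :: "real^'n"
  assumes lin: "linear A" "linear D" "linear M"
    and AD: "\<And>h. A (D h) = M h"
    and A_sym: "\<And>x y. x \<bullet> A y + y \<bullet> A x = 2 * (g * (x \<bullet> y) + \<beta> * (w \<bullet> x) * (w \<bullet> y))"
    and g: "0 < g" and \<beta>: "0 \<le> \<beta>"
    and M_sym: "\<And>x y. x \<bullet> M y = y \<bullet> M x" and M_nonpos: "\<And>h. h \<bullet> M h \<le> 0"
  shows "(\<Sum>i\<in>UNIV. D (axis i 1) $ i) \<le> 0"
proof -
  have "g * (x \<bullet> x) \<le> x \<bullet> A x" for x
  proof -
    have "0 \<le> \<beta> * (w \<bullet> x) * (w \<bullet> x)" using \<beta> by (metis mult.assoc mult_nonneg_nonneg zero_le_square)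
    then show ?thesis using A_sym[of x x] by (smt (verit))
  qed
  then have "inj A" by (rule inj_if_coercive[OF lin(1) g])
  moreover have "(*v) (matrix A) = A" using lin(1) by (simp add: fun_eq_iff matrix_works)
  ultimately have "inj ((*v) (matrix A))" by simp
  then obtain C where CA: "C ** matrix A = mat 1" using matrix_left_invertible_injective by blast
  have "matrix A ** matrix D = matrix M"
    using AD matrix_compose[OF lin(2,1)] by (simp add: o_def fun_eq_iff)
  then have DC: "matrix D = C ** matrix M"
    by (metis CA matrix_mul_assoc matrix_mul_lid)
  have "transpose (matrix M) = matrix M"
    by (simp add: vec_eq_iff transpose_def matrix_nth_eq_inner_axis M_sym)
  moreover have "h \<bullet> (matrix M *v h) \<le> 0" for h
    using M_nonpos lin(3) by (simp add: matrix_works)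
  moreover have "matrix A + transpose (matrix A) = (2 * g) *\<^sub>R mat 1 + (2 * \<beta>) *\<^sub>R (\<chi> i j. w $ i * w $ j)"
  proof -
    have "matrix A $ i $ j + matrix A $ j $ i = 2 * g * (if i = j then 1 else 0) + 2 * \<beta> * (w $ i * w $ j)" for i j
    proof -
      have "matrix A $ i $ j + matrix A $ j $ i = axis i 1 \<bullet> A (axis j 1) + axis j 1 \<bullet> A (axis i 1)"
        by (simp add: matrix_nth_eq_inner_axis)
      also have "\<dots> = 2 * (g * (axis i 1 \<bullet> axis j (1::real)) + \<beta> * (w \<bullet> axis i 1) * (w \<bullet> axis j 1))"
        by (rule A_sym)
      also have "axis i 1 \<bullet> axis j (1::real) = (if i = j then 1 else 0)" by (simp add: inner_axis_axis)
      finally show ?thesis by (simp add: inner_axis algebra_simps)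
    qed
    then show ?thesis by (simp add: vec_eq_iff transpose_def mat_def)
  qed
  ultimately have "trace (C ** matrix M) \<le> 0"
    using trace_left_inverse_mult_nonpos[OF CA] g \<beta> by simp
  moreover have "trace (matrix D) = (\<Sum>i\<in>UNIV. D (axis i 1) $ i)"
    by (simp add: trace_def matrix_def)
  ultimately show ?thesis using DC by simp
qed

section \<open>The maximum principle\<close>

lemma has_derivative_Zfun:
  "((\<lambda>y. Zfun k G \<Omega> e0 y t) has_derivative (\<lambda>h. \<Omega>\<^sup>2 *\<^sub>R cross3 k (cross3 k h))) (at x)"
proof -
  have "bounded_linear (\<lambda>h. cross3 k (cross3 k h))"
    using bounded_linear_compose[of "cross3 k" "cross3 k"] linear_cross3
    by (simp add: linear_conv_bounded_linear)
  from has_derivative_scaleR_right[OF bounded_linear_imp_has_derivative[OF this], of "\<Omega>\<^sup>2" "at x"]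
  have "((\<lambda>y. - (G *\<^sub>R e0 t) + \<Omega>\<^sup>2 *\<^sub>R cross3 k (cross3 k y)) has_derivative
      (\<lambda>h. 0 + \<Omega>\<^sup>2 *\<^sub>R cross3 k (cross3 k h))) (at x)"
    by (intro has_derivative_add has_derivative_const)
  then show ?thesis by (simp add: Zfun_def)
qed

text \<open>As \<open>\<nabla>(v\<^sup>2)\<close> vanishes at a maximum point, the derivative there is the Hessian of \<open>v\<close>
  plus \<open>v\<^sup>2 \<Omega>\<^sup>2 J\<^sup>2\<close>.\<close>
lemma has_derivative_flux_argument_at_max:
  fixes v :: "real^3 \<Rightarrow> real"
  assumes S: "open S" "x \<in> S" and max: "\<And>y. y \<in> S \<Longrightarrow> v y \<le> v x" and v: "C2_on S v"
  obtains M where "((\<lambda>y. grad v y + (v y)\<^sup>2 *\<^sub>R Zfun k G \<Omega> e0 y t) has_derivative M) (at x)"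
    and "\<And>h h'. h \<bullet> M h' = h' \<bullet> M h" and "\<And>h. h \<bullet> M h \<le> 0"
proof
  let ?H = "\<lambda>h. \<chi> i. frechet_derivative (pd i v) (at x) h"
  define c where "c = (v x)\<^sup>2 * \<Omega>\<^sup>2"
  have df: "\<And>y. y \<in> S \<Longrightarrow> v differentiable at y" and dpf: "\<And>i. pd i v differentiable at x"
    using v S(2) by (auto simp: C2_on_def)
  have "(v has_derivative (\<lambda>_. 0)) (at x)" using has_derivative_zero_at_max[OF S max df[OF S(2)]] .
  from has_derivative_mult[OF this this]
  have "((\<lambda>y. (v y)\<^sup>2) has_derivative (\<lambda>_. 0)) (at x)" by (simp add: power2_eq_square)
  from has_derivative_scaleR[OF this has_derivative_Zfun]
  have "((\<lambda>y. (v y)\<^sup>2 *\<^sub>R Zfun k G \<Omega> e0 y t) has_derivative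
      (\<lambda>h. c *\<^sub>R cross3 k (cross3 k h))) (at x)"
    by (simp add: c_def)
  with has_derivative_grad[OF dpf]
  show "((\<lambda>y. grad v y + (v y)\<^sup>2 *\<^sub>R Zfun k G \<Omega> e0 y t) has_derivative
      (\<lambda>h. ?H h + c *\<^sub>R cross3 k (cross3 k h))) (at x)"
    by (rule has_derivative_add)
  show "h \<bullet> (?H h' + c *\<^sub>R cross3 k (cross3 k h')) = h' \<bullet> (?H h + c *\<^sub>R cross3 k (cross3 k h))" for h h'
    using inner_hessian_commute[OF S v, of h h']
    by (simp add: inner_add_right inner_cross3_cross3 inner_commute[of h'])
  have "h \<bullet> ?H h \<le> 0" for h
    using hessian_form_nonpos_at_max[OF S max df dpf] by (simp add: inner_vec_def)
  moreover have "0 \<le> c" by (simp add: c_def)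
  ultimately show "h \<bullet> (?H h + c *\<^sub>R cross3 k (cross3 k h)) \<le> 0" for h
    using inner_cross3_cross3_self_nonpos[of h k]
    by (simp add: inner_add_right add_nonpos_nonpos mult_nonneg_nonpos)
qed

lemma has_derivative_Ffun_comp:
  assumes a_pos: "\<And>i. i \<le> N \<Longrightarrow> a i > 0" and alpha0: "\<alpha> 0 = 0"
    and mono: "\<And>i. i < N \<Longrightarrow> \<alpha> i < \<alpha> (Suc i)"
    and W: "(W has_derivative DW) (at x)" and \<zeta>: "(\<zeta> has_derivative (\<lambda>_. 0)) (at x)"
  obtains \<beta> where "0 \<le> \<beta>"
    and "((\<lambda>y. Ffun N a \<alpha> k (\<zeta> y) (W y)) has_derivative
      (\<lambda>h. gfun N a \<alpha> (norm (W x)) *\<^sub>R DW h + (\<beta> * (W x \<bullet> DW h)) *\<^sub>R W x + \<zeta> x *\<^sub>R cross3 k (DW h))) (at x)"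
proof -
  obtain \<beta> where \<beta>: "0 \<le> \<beta>" and G: "((\<lambda>v. gfun N a \<alpha> (norm v) *\<^sub>R v) has_derivative
      (\<lambda>h. gfun N a \<alpha> (norm (W x)) *\<^sub>R h + (\<beta> * (W x \<bullet> h)) *\<^sub>R W x)) (at (W x))"
    using has_derivative_gfun_norm_scaleR[of N a \<alpha>, OF a_pos alpha0 mono] by blast
  have "((\<lambda>y. gfun N a \<alpha> (norm (W y)) *\<^sub>R W y) has_derivative
      (\<lambda>h. gfun N a \<alpha> (norm (W x)) *\<^sub>R DW h + (\<beta> * (W x \<bullet> DW h)) *\<^sub>R W x)) (at x)"
    using has_derivative_compose[OF W G] by simp
  moreover have "((\<lambda>y. \<zeta> y *\<^sub>R cross3 k (W y)) has_derivative (\<lambda>h. \<zeta> x *\<^sub>R cross3 k (DW h))) (at x)"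
    using has_derivative_scaleR[OF \<zeta> bounded_linear.has_derivative[OF _ W], of "cross3 k"] linear_cross3
    by (simp add: linear_conv_bounded_linear)
  ultimately have "((\<lambda>y. gfun N a \<alpha> (norm (W y)) *\<^sub>R W y + \<zeta> y *\<^sub>R cross3 k (W y)) has_derivative
      (\<lambda>h. gfun N a \<alpha> (norm (W x)) *\<^sub>R DW h + (\<beta> * (W x \<bullet> DW h)) *\<^sub>R W x + \<zeta> x *\<^sub>R cross3 k (DW h)))
      (at x)"
    by (rule has_derivative_add)
  with \<beta> show ?thesis by (rule that[unfolded Ffun_def])
qed

lemma scaleR_plus_cross3_symmetric_part:
  fixes g \<beta> z :: real and w k :: "real^3"
  defines "A \<equiv> \<lambda>h. g *\<^sub>R h + (\<beta> * (w \<bullet> h)) *\<^sub>R w + z *\<^sub>R cross3 k h"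
  shows "linear A" and "x \<bullet> A y + y \<bullet> A x = 2 * (g * (x \<bullet> y) + \<beta> * (w \<bullet> x) * (w \<bullet> y))"
proof -
  show "linear A"
    unfolding A_def by (intro linearI) (simp_all add: cross_add_right cross_mult_right inner_add_right algebra_simps)
  have A_inner: "x \<bullet> A y = g * (x \<bullet> y) + \<beta> * (w \<bullet> x) * (w \<bullet> y) + z * (x \<bullet> cross3 k y)" for x y
    by (simp add: A_def inner_add_right inner_commute[of x] algebra_simps)
  show "x \<bullet> A y + y \<bullet> A x = 2 * (g * (x \<bullet> y) + \<beta> * (w \<bullet> x) * (w \<bullet> y))"
    using A_inner[of x y] A_inner[of y x] inner_cross3_skew[of x k y] inner_commute[of y x] by algebra
qed

lemma divg_nonpos_at_max:
  fixes v :: "real^3 \<Rightarrow> real"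
  assumes k: "norm k = 1" and a_pos: "\<And>i. i \<le> N \<Longrightarrow> a i > 0" and alpha0: "\<alpha> 0 = 0"
    and mono: "\<And>i. i < N \<Longrightarrow> \<alpha> i < \<alpha> (Suc i)"
    and S: "open S" "x \<in> S" and max: "\<And>y. y \<in> S \<Longrightarrow> v y \<le> v x" and v: "C2_on S v"
    and W: "W = (\<lambda>y. Xfun N a \<alpha> k Rs (v y) (grad v y + (v y)\<^sup>2 *\<^sub>R Zfun k G \<Omega> e0 y t))"
    and dW: "W differentiable at x"
  shows "divg W x \<le> 0"
proof -
  define DW where "DW = frechet_derivative W (at x)"
  have hW: "(W has_derivative DW) (at x)" unfolding DW_def using dW frechet_derivative_works by blast
  obtain M where M: "((\<lambda>y. grad v y + (v y)\<^sup>2 *\<^sub>R Zfun k G \<Omega> e0 y t) has_derivative M) (at x)"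
    and M_sym: "\<And>h h'. h \<bullet> M h' = h' \<bullet> M h" and M_nonpos: "\<And>h. h \<bullet> M h \<le> 0"
    using has_derivative_flux_argument_at_max[OF S max v] by blast
  have "(v has_derivative (\<lambda>_. 0)) (at x)"
    using has_derivative_zero_at_max[of S x v, OF S max] v S(2) by (simp add: C2_on_def)
  then have "((\<lambda>y. Rs * v y) has_derivative (\<lambda>_. 0)) (at x)"
    using has_derivative_mult_right by fastforce
  then obtain \<beta> where \<beta>: "0 \<le> \<beta>" and F: "((\<lambda>y. Ffun N a \<alpha> k (Rs * v y) (W y)) has_derivative
      (\<lambda>h. gfun N a \<alpha> (norm (W x)) *\<^sub>R DW h + (\<beta> * (W x \<bullet> DW h)) *\<^sub>R W x + (Rs * v x) *\<^sub>R cross3 k (DW h))) (at x)"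
    using has_derivative_Ffun_comp[of N a \<alpha>, OF a_pos alpha0 mono hW] by blast
  define A where "A h = gfun N a \<alpha> (norm (W x)) *\<^sub>R h + (\<beta> * (W x \<bullet> h)) *\<^sub>R W x + (Rs * v x) *\<^sub>R cross3 k h"
    for h
  have "Ffun N a \<alpha> k (Rs * v y) (W y) = grad v y + (v y)\<^sup>2 *\<^sub>R Zfun k G \<Omega> e0 y t" for y
    unfolding W Xfun_def by (rule Ffun_inv_right[OF k a_pos alpha0 mono])
  with F have "((\<lambda>y. grad v y + (v y)\<^sup>2 *\<^sub>R Zfun k G \<Omega> e0 y t) has_derivative (\<lambda>h. A (DW h))) (at x)"
    by (simp add: A_def)
  from has_derivative_unique[OF this M] have AD: "A (DW h) = M h" for h
    by (simp add: fun_eq_iff)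
  have lin: "linear A" "linear DW" "linear M"
    using has_derivative_linear[OF hW] has_derivative_linear[OF M] scaleR_plus_cross3_symmetric_part(1)
    unfolding A_def by auto
  have A_sym: "x' \<bullet> A y + y \<bullet> A x' = 2 * (gfun N a \<alpha> (norm (W x)) * (x' \<bullet> y) + \<beta> * (W x \<bullet> x') * (W x \<bullet> y))"
    for x' y
    unfolding A_def by (rule scaleR_plus_cross3_symmetric_part(2))
  have g_pos: "0 < gfun N a \<alpha> (norm (W x))"
    using first_coeff_le_gfun[of N a \<alpha>, OF a_pos alpha0] a_pos[of 0] by (meson le0 order.strict_trans2)
  from trace_nonpos_of_factorization[OF lin AD A_sym g_pos \<beta> M_sym M_nonpos]
  have "(\<Sum>i\<in>UNIV. DW (axis i 1) $ i) \<le> 0" .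
  then show ?thesis unfolding divg_def DW_def .
qed

lemma vector_derivative_ge_at_left_max:
  fixes f :: "real \<Rightarrow> real"
  assumes t: "0 < t" "t \<le> T" and df: "f differentiable (at t within {0<..T})"
    and le: "\<And>s. 0 < s \<Longrightarrow> s < t \<Longrightarrow> f s - \<epsilon> * s \<le> f t - \<epsilon> * t"
  shows "\<epsilon> \<le> vector_derivative f (at t within {0<..T})"
proof -
  define d where "d = vector_derivative f (at t within {0<..T})"
  have "(f has_real_derivative d) (at t within {0<..T})"
    unfolding d_def using df vector_derivative_works has_real_derivative_iff_has_vector_derivative by blast
  then have "(f has_real_derivative d) (at t within {0<..<t})"
    by (rule DERIV_subset) (use t in auto)
  moreover have "at t within {0<..<t} = at_left t"
    by (rule at_within_nhd[where S="{0<..}"]) (use t in auto)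
  ultimately have lim: "((\<lambda>s. (f s - f t) / (s - t)) \<longlongrightarrow> d) (at_left t)"
    using has_field_derivative_iff by auto
  have "eventually (\<lambda>s. 0 < s \<and> s < t) (at_left t)"
    using eventually_at_left_real[of 0 t] t by (auto elim: eventually_mono)
  then have "eventually (\<lambda>s. \<epsilon> \<le> (f s - f t) / (s - t)) (at_left t)"
  proof (rule eventually_mono)
    fix s assume s: "0 < s \<and> s < t"
    then have "f s - f t \<le> \<epsilon> * (s - t)" using le[of s] by (simp add: algebra_simps)
    then show "\<epsilon> \<le> (f s - f t) / (s - t)" using s by (simp add: le_divide_eq)
  qed
  from tendsto_lowerbound[OF lim this] show ?thesis by (simp add: d_def)
qed

lemma C21_slice:
  assumes "C21 U T u" "0 < t" "t \<le> T"
  shows "C2_on U (\<lambda>z. u z t)"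
    and "\<And>x. x \<in> U \<Longrightarrow> (\<lambda>s. u x s) differentiable (at t within {0<..T})"
proof -
  let ?UT = "{(x, t). x \<in> U \<and> 0 < t \<and> t \<le> T}"
  have inUT: "(\<lambda>y. (y, t)) ` U \<subseteq> ?UT" using assms(2,3) by auto
  have "continuous_on ?UT (\<lambda>(x, t). pd j (pd i (\<lambda>z. u z t)) x)" for i j
    using assms(1) unfolding C21_def Let_def by blast
  from continuous_on_compose2[OF this _ inUT]
  have "continuous_on U (pd j (pd i (\<lambda>z. u z t)))" for i j
    by (simp add: continuous_on_Pair continuous_on_id continuous_on_const)
  then show "C2_on U (\<lambda>z. u z t)"
    using assms unfolding C21_def C2_on_def Let_def by (auto simp: eta_contract_eq)
  show "(\<lambda>s. u x s) differentiable (at t within {0<..T})" if "x \<in> U" for x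
    using assms that unfolding C21_def Let_def by auto
qed

lemma no_interior_perturbed_max:
  fixes u :: "real^3 \<Rightarrow> real \<Rightarrow> real"
  assumes k: "norm k = 1" and a_pos: "\<And>i. i \<le> N \<Longrightarrow> a i > 0" and alpha0: "\<alpha> 0 = 0"
    and mono: "\<And>i. i < N \<Longrightarrow> \<alpha> i < \<alpha> (Suc i)"
    and U: "open U" and u: "C21 U T u"
    and pde: "\<And>x t. x \<in> U \<Longrightarrow> 0 < t \<Longrightarrow> t \<le> T \<Longrightarrow>
       (let W = (\<lambda>y. Xfun N a \<alpha> k Rs (u y t)
                       (grad (\<lambda>z. u z t) y + (u y t)\<^sup>2 *\<^sub>R Zfun k G \<Omega> e0 y t))
        in W differentiable (at x) \<and>
           vector_derivative (\<lambda>s. u x s) (at t within {0<..T}) = divg W x)"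
    and \<epsilon>: "0 < \<epsilon>" and x0: "x0 \<in> U" and t0: "0 < t0" "t0 \<le> T"
    and max: "\<And>x t. x \<in> closure U \<Longrightarrow> 0 \<le> t \<Longrightarrow> t \<le> T \<Longrightarrow> u x t - \<epsilon> * t \<le> u x0 t0 - \<epsilon> * t0"
  shows False
proof -
  define W where "W = (\<lambda>y. Xfun N a \<alpha> k Rs (u y t0)
                       (grad (\<lambda>z. u z t0) y + (u y t0)\<^sup>2 *\<^sub>R Zfun k G \<Omega> e0 y t0))"
  have W_pde: "W differentiable (at x0)" "vector_derivative (\<lambda>s. u x0 s) (at t0 within {0<..T}) = divg W x0"
    using pde[OF x0 t0] unfolding W_def Let_def by simp_all
  have "divg W x0 \<le> 0"
  proof (rule divg_nonpos_at_max[OF k a_pos alpha0 mono U x0 _ C21_slice(1)[OF u t0] W_def W_pde(1)])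
    show "u y t0 \<le> u x0 t0" if "y \<in> U" for y
      using max[of y t0] closure_subset[of U] that t0 by auto
  qed
  moreover have "\<epsilon> \<le> vector_derivative (\<lambda>s. u x0 s) (at t0 within {0<..T})"
  proof (rule vector_derivative_ge_at_left_max[OF t0 C21_slice(2)[OF u t0 x0]])
    show "u x0 s - \<epsilon> * s \<le> u x0 t0 - \<epsilon> * t0" if "0 < s" "s < t0" for s
      using max[of x0 s] closure_subset[of U] that x0 t0 by auto
  qed
  ultimately show False using W_pde(2) \<epsilon> by simp
qed

lemma le_SUP_if_perturbed_max:
  fixes f \<tau> :: "'a \<Rightarrow> real"
  assumes B: "B \<subseteq> K" and bdd: "bdd_above (f ` B)" and C: "\<And>q. q \<in> K \<Longrightarrow> \<bar>\<tau> q\<bar> \<le> C"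
    and perturbed_max: "\<And>\<epsilon>. 0 < \<epsilon> \<Longrightarrow> \<exists>p\<in>B. \<forall>q\<in>K. f q - \<epsilon> * \<tau> q \<le> f p - \<epsilon> * \<tau> p"
    and q: "q \<in> K"
  shows "f q \<le> (SUP p\<in>B. f p)"
proof (rule field_le_epsilon)
  fix e :: real assume e: "0 < e"
  have C0: "0 \<le> C" using C[OF q] by linarith
  define \<epsilon> where "\<epsilon> = e / (2 * C + 1)"
  have \<epsilon>: "0 < \<epsilon>" using e C0 by (simp add: \<epsilon>_def)
  obtain p where p: "p \<in> B" and pmax: "\<And>q. q \<in> K \<Longrightarrow> f q - \<epsilon> * \<tau> q \<le> f p - \<epsilon> * \<tau> p"
    using perturbed_max[OF \<epsilon>] by blast
  have "\<epsilon> * (\<tau> q - \<tau> p) \<le> \<epsilon> * (2 * C + 1)"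
    using C[OF q] C[of p] p B \<epsilon> by (intro mult_left_mono) auto
  also have "\<dots> = e" using C0 by (simp add: \<epsilon>_def)
  finally have "f q \<le> f p + e" using pmax[OF q] by (simp add: algebra_simps)
  moreover have "f p \<le> (SUP p\<in>B. f p)" using bdd p by (rule cSUP_upper2) simp
  ultimately show "f q \<le> (SUP p\<in>B. f p) + e" by linarith
qed

lemma SUP_eq_SUP_if_perturbed_max_in:
  fixes f \<tau> :: "'a::topological_space \<Rightarrow> real"
  assumes K: "compact K" and f: "continuous_on K f" and \<tau>: "continuous_on K \<tau>" and B: "B \<subseteq> K"
    and max_in_B: "\<And>\<epsilon> p. 0 < \<epsilon> \<Longrightarrow> p \<in> K \<Longrightarrow> (\<And>q. q \<in> K \<Longrightarrow> f q - \<epsilon> * \<tau> q \<le> f p - \<epsilon> * \<tau> p)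
      \<Longrightarrow> p \<in> B"
  shows "(SUP p\<in>K. f p) = (SUP p\<in>B. f p)"
proof (cases "K = {}")
  case False
  have perturbed_max: "\<exists>p\<in>B. \<forall>q\<in>K. f q - \<epsilon> * \<tau> q \<le> f p - \<epsilon> * \<tau> p" if "0 < \<epsilon>" for \<epsilon>
  proof -
    have "continuous_on K (\<lambda>q. f q - \<epsilon> * \<tau> q)" by (intro continuous_intros f \<tau>)
    from continuous_attains_sup[OF K False this] obtain p where "p \<in> K"
      and "\<And>q. q \<in> K \<Longrightarrow> f q - \<epsilon> * \<tau> q \<le> f p - \<epsilon> * \<tau> p" by blast
    with max_in_B[OF that] show ?thesis by blast
  qed
  then have "B \<noteq> {}" using zero_less_one by blast
  have "compact (f ` K)" "compact (\<tau> ` K)"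
    using compact_continuous_image f \<tau> K by blast+
  then have bdd_K: "bdd_above (f ` K)" and "bounded (\<tau> ` K)"
    by (simp_all add: bounded_imp_bdd_above compact_imp_bounded)
  then obtain C where C: "\<And>q. q \<in> K \<Longrightarrow> \<bar>\<tau> q\<bar> \<le> C"
    unfolding bounded_iff by auto
  have bdd: "bdd_above (f ` B)"
    using bdd_K B by (meson bdd_above_mono image_mono)
  have "(SUP p\<in>K. f p) \<le> (SUP p\<in>B. f p)"
    using False le_SUP_if_perturbed_max[OF B bdd C perturbed_max] by (intro cSUP_least) auto
  moreover have "(SUP p\<in>B. f p) \<le> (SUP p\<in>K. f p)"
    using \<open>B \<noteq> {}\<close> bdd_K B by (rule cSUP_subset_mono) simp
  ultimately show ?thesis by simp
qed (use B in simp)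

theorem theorem5p1:
  fixes N :: nat and \<alpha> a :: "nat \<Rightarrow> real" and k :: "real^3" and Rs G \<Omega> T :: real
    and e0 :: "real \<Rightarrow> real^3" and U :: "(real^3) set" and u :: "real^3 \<Rightarrow> real \<Rightarrow> real"
  assumes N: "N \<ge> 1"
    and alpha0: "\<alpha> 0 = 0"
    and alpha_mono: "\<And>i. i < N \<Longrightarrow> \<alpha> i < \<alpha> (Suc i)"
    and a_pos: "\<And>i. i \<le> N \<Longrightarrow> a i > 0"
    and k_unit: "norm k = 1"
    and Rs: "Rs \<ge> 0"
    and G: "G > 0"
    and Om: "\<Omega> \<ge> 0"
    and e0_smooth: "smooth_fun e0"
    and e0_unit: "\<And>t. norm (e0 t) = 1"
    and U_open: "open U" and U_bdd: "bounded U" and U_C1: "C1_boundary U"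
    and T: "T > 0"
    and u_cont: "continuous_on {(x,t). x \<in> closure U \<and> 0 \<le> t \<and> t \<le> T} (\<lambda>(x,t). u x t)"
    and u_C21: "C21 U T u"
    and u_nonneg: "\<And>x t. x \<in> closure U \<Longrightarrow> 0 \<le> t \<Longrightarrow> t \<le> T \<Longrightarrow> u x t \<ge> 0"
    and pde: "\<And>x t. x \<in> U \<Longrightarrow> 0 < t \<Longrightarrow> t \<le> T \<Longrightarrow>
       (let W = (\<lambda>y. Xfun N a \<alpha> k Rs (u y t)
                       (grad (\<lambda>z. u z t) y + (u y t)\<^sup>2 *\<^sub>R Zfun k G \<Omega> e0 y t))
        in W differentiable (at x) \<and>
           vector_derivative (\<lambda>s. u x s) (at t within {0<..T}) = divg W x)"
  shows "(SUP (x,t)\<in>{(x,t). x \<in> closure U \<and> 0 \<le> t \<and> t \<le> T}. u x t)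
       = (SUP (x,t)\<in>{(x,t). x \<in> closure U \<and> 0 \<le> t \<and> t \<le> T}
                    - {(x,t). x \<in> U \<and> 0 < t \<and> t \<le> T}. u x t)"
proof (rule SUP_eq_SUP_if_perturbed_max_in[where \<tau> = snd])
  have "{(x,t). x \<in> closure U \<and> 0 \<le> t \<and> t \<le> T} = closure U \<times> {0..T}" by auto
  then show "compact {(x,t). x \<in> closure U \<and> 0 \<le> t \<and> t \<le> T}"
    using U_bdd by (simp add: compact_Times)
  fix \<epsilon> and p :: "(real^3) \<times> real"
  assume \<epsilon>: "0 < \<epsilon>" and p: "p \<in> {(x,t). x \<in> closure U \<and> 0 \<le> t \<and> t \<le> T}"
    and max: "\<And>q. q \<in> {(x,t). x \<in> closure U \<and> 0 \<le> t \<and> t \<le> T} \<Longrightarrow>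
      (case q of (x, t) \<Rightarrow> u x t) - \<epsilon> * snd q \<le> (case p of (x, t) \<Rightarrow> u x t) - \<epsilon> * snd p"
  obtain x0 t0 where p_eq: "p = (x0, t0)" by (cases p)
  have "(x0, t0) \<notin> {(x,t). x \<in> U \<and> 0 < t \<and> t \<le> T}"
  proof
    assume "(x0, t0) \<in> {(x,t). x \<in> U \<and> 0 < t \<and> t \<le> T}"
    then have x0: "x0 \<in> U" and t0: "0 < t0" "t0 \<le> T" by simp_all
    show False
    proof (rule no_interior_perturbed_max[OF k_unit a_pos alpha0 alpha_mono U_open u_C21 pde \<epsilon> x0 t0])
      show "u x t - \<epsilon> * t \<le> u x0 t0 - \<epsilon> * t0" if "x \<in> closure U" "0 \<le> t" "t \<le> T" for x t
        using max[of "(x, t)"] that by (simp add: p_eq)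
    qed
  qed
  then show "p \<in> {(x,t). x \<in> closure U \<and> 0 \<le> t \<and> t \<le> T} - {(x,t). x \<in> U \<and> 0 < t \<and> t \<le> T}"
    using p p_eq by blast
next
  show "continuous_on {(x,t). x \<in> closure U \<and> 0 \<le> t \<and> t \<le> T} snd"
    by (rule continuous_on_snd[OF continuous_on_id])
qed (use u_cont in auto)

end
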